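(* Let $B_k$ denote the Bernoulli numbers, defined by $\frac{X}{e^X-1}=\sum_{k\ge0}\frac{B_k}{k!}X^k$, and for $n\in\mathbb{N}$ let $L_n(X)=\dfrac{e^Xq^n}{1-e^Xq^n}$. Then for all $n\in\mathbb{N}$ \[ L_n(X)\,L_n(Y)=\sum_{k>0}\frac{B_k}{k!}(X-Y)^{k-1}L_n(X)+\sum_{k>0}\frac{B_k}{k!}(Y-X)^{k-1}L_n(Y)+\frac{L_n(X)-L_n(Y)}{X-Y}. \] *)

theory Defs
  imports "HOL-Analysis.Analysis" "HOL-Computational_Algebra.Formal_Power_Series"
begin

text \<open>Bernoulli numbers via the generating function X/(e^X - 1) = sum B_k/k! X^k
  (so B_1 = -1/2).\<close>
definition bernoulli_num :: "nat \<Rightarrow> 'a::field_char_0" where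
  "bernoulli_num k = fact k * fps_nth (fps_X / (fps_exp 1 - 1)) k"

definition Lfun :: "complex \<Rightarrow> nat \<Rightarrow> complex \<Rightarrow> complex" where
  "Lfun q n x = exp x * q ^ n / (1 - exp x * q ^ n)"

end

theory Submission
  imports Defs "HOL-Complex_Analysis.Complex_Analysis"
begin

text \<open>With \<open>z = X - Y\<close>, the generating function \<open>z/(e^z - 1)\<close> of the Bernoulli numbers
  is analytic for \<open>|z| < 2\<pi>\<close> (its nearest poles are \<open>\<plusminus>2\<pi>i\<close>), so the series on the right
  sums to \<open>1/(e^z - 1) - 1/z\<close> and, at \<open>-z\<close>, to \<open>e^z/(1 - e^z) + 1/z\<close>. Writing
  \<open>L\<^sub>n(X) = eb/(1 - eb)\<close>, \<open>L\<^sub>n(Y) = b/(1 - b)\<close> with \<open>e = e^z\<close>, the terms in \<open>1/z\<close> cancel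
  and what remains is a partial fraction decomposition of \<open>L\<^sub>n(X) L\<^sub>n(Y)\<close>.\<close>

lemma exp_neq_1_if_norm_less_2pi:
  fixes w :: complex
  assumes "w \<noteq> 0" "norm w < 2 * pi"
  shows "exp w \<noteq> 1"
proof
  assume "exp w = 1"
  then obtain n :: int where re: "Re w = 0" and im: "Im w = of_int (2 * n) * pi"
    by (auto simp: exp_eq_1)
  with assms(1) have "n \<noteq> 0" by (auto simp: complex_eq_iff)
  have "norm w = \<bar>Im w\<bar>" using re by (simp add: cmod_def)
  also have "\<dots> = 2 * pi * \<bar>real_of_int n\<bar>" using im by (simp add: abs_mult)
  also have "\<dots> \<ge> 2 * pi" using \<open>n \<noteq> 0\<close> by simp
  finally show False using assms(2) by simp
qed

lemma subdegree_fps_exp_minus_1: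
  fixes c :: "'a :: field_char_0"
  assumes "c \<noteq> 0"
  shows "subdegree (fps_exp c - 1) = 1"
  using assms by (intro subdegreeI) auto

lemma bernoulli_num_0 [simp]: "bernoulli_num 0 = 1"
proof -
  have "subdegree (fps_exp 1 - 1 :: 'a fps) = 1"
    by (rule subdegree_fps_exp_minus_1) simp
  then show ?thesis
    using fps_divide_nth_base[of "fps_exp 1 - 1 :: 'a fps" fps_X] by (simp add: bernoulli_num_def)
qed

lemma
  fixes z :: complex
  shows fps_conv_radius_bernoulli_gf:
      "fps_conv_radius (fps_X / (fps_exp 1 - 1) :: complex fps) \<ge> 2 * pi"
    and eval_fps_bernoulli_gf:
      "norm z < 2 * pi \<Longrightarrow>
         eval_fps (fps_X / (fps_exp 1 - 1)) z = (if z = 0 then 1 else z / (exp z - 1))"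
proof -
  have radius: "fps_conv_radius (fps_exp 1 - 1 :: complex fps) = \<infinity>"
    using fps_conv_radius_diff[of "fps_exp (1::complex)" 1] by simp
  have subdeg: "subdegree (fps_exp 1 - 1 :: complex fps) = 1"
    by (rule subdegree_fps_exp_minus_1) simp
  have nz: "eval_fps (fps_exp 1 - 1) w \<noteq> 0" if "w \<in> eball 0 (2 * pi)" "w \<noteq> 0" for w :: complex
    using exp_neq_1_if_norm_less_2pi[of w] that by (simp add: eval_fps_diff)
  have "Min {ereal (2 * pi), fps_conv_radius (fps_X :: complex fps),
             fps_conv_radius (fps_exp 1 - 1 :: complex fps)}
          \<le> fps_conv_radius (fps_X / (fps_exp 1 - 1) :: complex fps)"
    by (rule fps_conv_radius_divide) (use subdeg nz radius in auto)
  then show "fps_conv_radius (fps_X / (fps_exp 1 - 1) :: complex fps) \<ge> 2 * pi"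
    using radius by simp
  assume "norm z < 2 * pi"
  then show "eval_fps (fps_X / (fps_exp 1 - 1)) z = (if z = 0 then 1 else z / (exp z - 1))"
    by (subst eval_fps_divide[where r = "2 * pi"])
       (use subdeg nz radius in \<open>auto simp: eval_fps_diff\<close>)
qed

lemma bernoulli_num_sums:
  fixes z :: complex
  assumes "z \<noteq> 0" "norm z < 2 * pi"
  shows "(\<lambda>k. bernoulli_num k / fact k * z ^ k) sums (z / (exp z - 1))"
proof -
  have "ereal (norm z) < ereal (2 * pi)" using assms(2) by simp
  also have "\<dots> \<le> fps_conv_radius (fps_X / (fps_exp 1 - 1) :: complex fps)"
    by (rule fps_conv_radius_bernoulli_gf)
  finally show ?thesis
    using sums_eval_fps by (force simp: bernoulli_num_def eval_fps_bernoulli_gf assms)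
qed

lemma bernoulli_num_Suc_sums:
  fixes z :: complex
  assumes "z \<noteq> 0" "norm z < 2 * pi"
  shows "(\<lambda>k. bernoulli_num (Suc k) / fact (Suc k) * z ^ k) sums (1 / (exp z - 1) - 1 / z)"
proof -
  have "(\<lambda>k. bernoulli_num (Suc k) / fact (Suc k) * z ^ Suc k) sums (z / (exp z - 1) - 1)"
    using bernoulli_num_sums[OF assms] by (subst sums_Suc_iff) simp
  then have "(\<lambda>k. bernoulli_num (Suc k) / fact (Suc k) * z ^ Suc k / z) sums ((z / (exp z - 1) - 1) / z)"
    by (rule sums_divide)
  moreover have "exp z \<noteq> 1" using exp_neq_1_if_norm_less_2pi[OF assms] .
  ultimately show ?thesis
    using assms(1) by (simp add: diff_divide_distrib del: fact_Suc)
qed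

lemma mult_frac_one_minus_partial_fractions:
  fixes e b :: "'a :: field"
  assumes "e \<noteq> 1" "e * b \<noteq> 1" "b \<noteq> 1"
  shows "e * b / (1 - e * b) * (b / (1 - b)) =
           1 / (e - 1) * (e * b / (1 - e * b)) + e / (1 - e) * (b / (1 - b))"
proof -
  have "1 - e \<noteq> 0" "e - 1 \<noteq> 0" "1 - e * b \<noteq> 0" "1 - b \<noteq> 0"
    using assms by auto
  then show ?thesis
    by (simp add: divide_simps) algebra
qed

theorem lemma3p1:
  fixes q X Y :: complex and n :: nat
  assumes "exp X * q ^ n \<noteq> 1" and "exp Y * q ^ n \<noteq> 1"
    and "X \<noteq> Y" and "cmod (X - Y) < 2 * pi"
  shows "Lfun q n X * Lfun q n Y =
      (\<Sum>k. bernoulli_num (Suc k) / fact (Suc k) * (X - Y) ^ k) * Lfun q n X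
    + (\<Sum>k. bernoulli_num (Suc k) / fact (Suc k) * (Y - X) ^ k) * Lfun q n Y
    + (Lfun q n X - Lfun q n Y) / (X - Y)"
proof -
  define e where "e = exp (X - Y)"
  define b where "b = exp Y * q ^ n"
  have XY: "X - Y \<noteq> 0" "norm (X - Y) < 2 * pi" and YX: "Y - X \<noteq> 0" "norm (Y - X) < 2 * pi"
    using assms(3,4) by (auto simp: norm_minus_commute)
  have "e \<noteq> 1" "e * b \<noteq> 1" "b \<noteq> 1"
    using exp_neq_1_if_norm_less_2pi[OF XY] assms(1,2) by (simp_all add: e_def b_def exp_diff)
  have "Lfun q n X = e * b / (1 - e * b)" "Lfun q n Y = b / (1 - b)"
    by (simp_all add: Lfun_def e_def b_def exp_diff)
  then have "Lfun q n X * Lfun q n Y = 1 / (e - 1) * Lfun q n X + e / (1 - e) * Lfun q n Y"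
    using mult_frac_one_minus_partial_fractions[OF \<open>e \<noteq> 1\<close> \<open>e * b \<noteq> 1\<close> \<open>b \<noteq> 1\<close>] by simp
  moreover have "(\<Sum>k. bernoulli_num (Suc k) / fact (Suc k) * (X - Y) ^ k) = 1 / (e - 1) - 1 / (X - Y)"
    using sums_unique[OF bernoulli_num_Suc_sums[OF XY]] by (simp add: e_def)
  moreover have "(\<Sum>k. bernoulli_num (Suc k) / fact (Suc k) * (Y - X) ^ k) = e / (1 - e) + 1 / (X - Y)"
  proof -
    have "1 / (exp (Y - X) - 1) = e / (1 - e)"
      using \<open>e \<noteq> 1\<close> by (simp add: e_def exp_diff field_simps)
    moreover have "1 / (Y - X) = - (1 / (X - Y))"
      by (metis divide_minus_right minus_diff_eq)
    ultimately show ?thesis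
      using sums_unique[OF bernoulli_num_Suc_sums[OF YX]] by simp
  qed
  ultimately show ?thesis
    by (simp add: ring_distribs diff_divide_distrib)
qed

end
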